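(* Let $E$ be a finite set and let $\mathcal{W}\subseteq\{+,-,0\}^E$ satisfy (A1), (A2) and (A3). Then $\mathcal{W}$ is an affine oriented matroid.
   Context: For $X\in\{+,-,0\}^E$: $X^+=\{e:X_e=+\}$, $X^-=\{e:X_e=-\}$, support $\underline{X}=X^+\cup X^-$; $(-X)_e=-X_e$; composition $(X\circ Y)_e=X_e$ if $X_e\neq0$, else $Y_e$; $S(X,Y)=(X^+\cap Y^-)\cup(X^-\cap Y^+)$; $\mathcal{A}\circ\mathcal{B}=\{A\circ B: A\in\mathcal{A},B\in\mathcal{B}\}$. An oriented matroid on $F$ is $\mathcal{O}\subseteq\{+,-,0\}^F$ with: (O1) zero vector in $\mathcal{O}$; (O2) $X\in\mathcal{O}\Rightarrow -X\in\mathcal{O}$; (O3) $X,Y\in\mathcal{O}\Rightarrow X\circ Y\in\mathcal{O}$; (O4) if $X,Y\in\mathcal{O}$, $\underline{X}=\underline{Y}$, $e\in S(X,Y)$, there is $Z\in\mathcal{O}$ with $Z_e=0$ and $Z_f=(X\circ Y)_f=(Y\circ X)_f$ for all $f\notin S(X,Y)$. $\mathcal{W}\subseteq\{+,-,0\}^E$ is an affine oriented matroid if there exist $g\notin E$ and an oriented matroid $\mathcal{O}$ on $E\cup\{g\}$ with $\mathcal{W}=\{X|_E : X\in\mathcal{O}, X_g=+\}$. For $X,Y$ with $\underline{X}=\underline{Y}$, $X\neq Y$, $e\in S(X,Y)$: $I_e(X,Y)=\{V : \underline{V}\subseteq\underline{X}\setminus\{e\}, V_f=X_f\ \forall f\notin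 S(X,Y)\}$, $I(X,Y)=\bigcup_{e\in S(X,Y)}I_e(X,Y)$. Sum: $(X+Y)_e=0$ if $e\in S(X,Y)$, else $(X\circ Y)_e$. $\mathrm{asym}(\mathcal{W})=\{V\in\mathcal{W}:-V\notin\mathcal{W}\}$, $\mathcal{P}(\mathcal{W})=\{X+(-Y): X,Y\in\mathrm{asym}(\mathcal{W}), \underline{X}=\underline{Y}, I(X,-Y)\cap\mathcal{W}=I(-X,Y)\cap\mathcal{W}=\emptyset\}$. Axioms: (A1) $X,Y\in\mathcal{W}\Rightarrow X\circ Y\in\mathcal{W}$ and $X\circ(-Y)\in\mathcal{W}$; (A2) if $X,Y\in\mathcal{W}$ with $\underline{X}=\underline{Y}$ then $I_e(X,Y)\cap\mathcal{W}\neq\emptyset$ for every $e\in S(X,Y)$; (A3) $\mathcal{P}(\mathcal{W})\circ\mathcal{W}\subseteq\mathcal{W}$. *)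

theory Defs
  imports Main
begin

text \<open>Signs and sign vectors. A sign vector on the ground set E is a function
  E \<Rightarrow> sign; the finite ground set E is modelled as (UNIV of) a finite type 'e.\<close>

datatype sign = Pos | Neg | Zero

definition sneg :: "('e \<Rightarrow> sign) \<Rightarrow> ('e \<Rightarrow> sign)" where
  "sneg X = (\<lambda>e. case X e of Pos \<Rightarrow> Neg | Neg \<Rightarrow> Pos | Zero \<Rightarrow> Zero)"

definition scomp :: "('e \<Rightarrow> sign) \<Rightarrow> ('e \<Rightarrow> sign) \<Rightarrow> ('e \<Rightarrow> sign)" where
  "scomp X Y = (\<lambda>e. if X e \<noteq> Zero then X e else Y e)"

definition supp :: "('e \<Rightarrow> sign) \<Rightarrow> 'e set" where
  "supp X = {e. X e \<noteq> Zero}"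

definition sep :: "('e \<Rightarrow> sign) \<Rightarrow> ('e \<Rightarrow> sign) \<Rightarrow> 'e set" where
  "sep X Y = {e. (X e = Pos \<and> Y e = Neg) \<or> (X e = Neg \<and> Y e = Pos)}"

definition oriented_matroid :: "('f \<Rightarrow> sign) set \<Rightarrow> bool" where
  "oriented_matroid OM \<longleftrightarrow>
     (\<lambda>_. Zero) \<in> OM \<and>
     (\<forall>X\<in>OM. sneg X \<in> OM) \<and>
     (\<forall>X\<in>OM. \<forall>Y\<in>OM. scomp X Y \<in> OM) \<and>
     (\<forall>X\<in>OM. \<forall>Y\<in>OM. supp X = supp Y \<longrightarrow>
        (\<forall>e\<in>sep X Y. \<exists>Z\<in>OM. Z e = Zero \<and>
           (\<forall>f. f \<notin> sep X Y \<longrightarrow> Z f = scomp X Y f \<and> Z f = scomp Y X f)))"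

text \<open>Affine oriented matroid: the extra element g \<notin> E is modelled as None in 'e option,
  E as the image of Some; restriction to E is composition with Some.\<close>
definition affine_oriented_matroid :: "('e \<Rightarrow> sign) set \<Rightarrow> bool" where
  "affine_oriented_matroid W \<longleftrightarrow>
     (\<exists>OM :: ('e option \<Rightarrow> sign) set. oriented_matroid OM \<and>
        W = {X \<circ> Some | X. X \<in> OM \<and> X None = Pos})"

definition I_e :: "'e \<Rightarrow> ('e \<Rightarrow> sign) \<Rightarrow> ('e \<Rightarrow> sign) \<Rightarrow> ('e \<Rightarrow> sign) set" where
  "I_e e X Y = {V. supp V \<subseteq> supp X - {e} \<and> (\<forall>f. f \<notin> sep X Y \<longrightarrow> V f = X f)}"

definition I_set :: "('e \<Rightarrow> sign) \<Rightarrow> ('e \<Rightarrow> sign) \<Rightarrow> ('e \<Rightarrow> sign) set" where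
  "I_set X Y = (\<Union>e\<in>sep X Y. I_e e X Y)"

definition ssum :: "('e \<Rightarrow> sign) \<Rightarrow> ('e \<Rightarrow> sign) \<Rightarrow> ('e \<Rightarrow> sign)" where
  "ssum X Y = (\<lambda>e. if e \<in> sep X Y then Zero else scomp X Y e)"

definition asym :: "('e \<Rightarrow> sign) set \<Rightarrow> ('e \<Rightarrow> sign) set" where
  "asym W = {V \<in> W. sneg V \<notin> W}"

definition P_set :: "('e \<Rightarrow> sign) set \<Rightarrow> ('e \<Rightarrow> sign) set" where
  "P_set W = {ssum X (sneg Y) | X Y. X \<in> asym W \<and> Y \<in> asym W \<and> supp X = supp Y \<and>
                 I_set X (sneg Y) \<inter> W = {} \<and> I_set (sneg X) Y \<inter> W = {}}"

definition axA1 :: "('e \<Rightarrow> sign) set \<Rightarrow> bool" where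
  "axA1 W \<longleftrightarrow> (\<forall>X\<in>W. \<forall>Y\<in>W. scomp X Y \<in> W \<and> scomp X (sneg Y) \<in> W)"

definition axA2 :: "('e \<Rightarrow> sign) set \<Rightarrow> bool" where
  "axA2 W \<longleftrightarrow> (\<forall>X\<in>W. \<forall>Y\<in>W. supp X = supp Y \<longrightarrow> (\<forall>e\<in>sep X Y. I_e e X Y \<inter> W \<noteq> {}))"

definition axA3 :: "('e \<Rightarrow> sign) set \<Rightarrow> bool" where
  "axA3 W \<longleftrightarrow> (\<forall>Z\<in>P_set W. \<forall>X\<in>W. scomp Z X \<in> W)"

end

theory Submission
  imports Defs
begin

text \<open>The oriented matroid on E \<union> {g} consists of W with g = +, of -W with g = -, and, with g = 0,
  of the vectors Z at infinity: those for which Z \<circ> X and (-Z) \<circ> X stay in W for all X \<in> W.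
  Composition and negation are then immediate from (A1), and elimination between two vectors
  positive at g is (A2). For X positive and Y negative at g, an induction on S(X,-Y) that uses
  (A3) whenever the I-sets miss W produces a vector at infinity agreeing with X off S(X,-Y); from
  it one further application of (A2) gives the eliminant. Finally, elimination between vectors
  vanishing at g reduces to the previous cases after composing with a vector nonzero at g whose
  support outside theirs is minimal.\<close>

lemma sneg_apply: "sneg X f = (case X f of Pos \<Rightarrow> Neg | Neg \<Rightarrow> Pos | Zero \<Rightarrow> Zero)"
  by (simp add: sneg_def)

lemma scomp_apply: "scomp X Y f = (if X f \<noteq> Zero then X f else Y f)"
  by (simp add: scomp_def)

lemma mem_supp_iff: "f \<in> supp X \<longleftrightarrow> X f \<noteq> Zero"
  by (simp add: supp_def)

lemma mem_sep_iff: "f \<in> sep X Y \<longleftrightarrow> (X f = Pos \<and> Y f = Neg) \<or> (X f = Neg \<and> Y f = Pos)"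
  by (simp add: sep_def)

lemma ssum_apply: "ssum X Y f = (if f \<in> sep X Y then Zero else scomp X Y f)"
  by (simp add: ssum_def)

lemmas sign_vector_simps = sneg_apply scomp_apply mem_supp_iff mem_sep_iff ssum_apply

lemma sneg_sneg [simp]: "sneg (sneg X) = X"
  by (rule ext) (simp add: sneg_apply split: sign.splits)

lemma sneg_zero [simp]: "sneg (\<lambda>_. Zero) = (\<lambda>_. Zero)"
  by (rule ext) (simp add: sneg_apply)

lemma scomp_zero_left [simp]: "scomp (\<lambda>_. Zero) X = X"
  by (rule ext) (simp add: scomp_apply)

lemma supp_sneg [simp]: "supp (sneg X) = supp X"
  by (auto simp: sign_vector_simps split: sign.splits)

lemma sep_commute: "sep X Y = sep Y X"
  by (auto simp: sep_def)

lemma sep_sneg_sneg [simp]: "sep (sneg X) (sneg Y) = sep X Y"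
  by (auto simp: sign_vector_simps split: sign.splits)

lemma sep_sneg_commute: "sep Y (sneg X) = sep X (sneg Y)"
  by (auto simp: sign_vector_simps split: sign.splits)

lemma sneg_scomp: "sneg (scomp X Y) = scomp (sneg X) (sneg Y)"
  by (rule ext) (simp add: sign_vector_simps split: sign.splits)

lemma scomp_assoc: "scomp (scomp X Y) Z = scomp X (scomp Y Z)"
  by (rule ext) (simp add: scomp_apply)

lemma supp_eq_Zero_iff: "supp X = supp Y \<Longrightarrow> X f = Zero \<longleftrightarrow> Y f = Zero"
  by (auto simp: supp_def)

lemma eq_off_sep: "supp X = supp Y \<Longrightarrow> f \<notin> sep X Y \<Longrightarrow> Y f = X f"
  by (drule supp_eq_Zero_iff[where f = f]) (cases "X f"; cases "Y f"; simp add: mem_sep_iff)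

lemma scomp_eq_off_sep: "supp X = supp Y \<Longrightarrow> f \<notin> sep X Y \<Longrightarrow> scomp X Y f = X f"
  by (drule supp_eq_Zero_iff[where f = f]) (cases "X f"; simp add: sign_vector_simps)

lemma ssum_eq_off_sep: "supp X = supp Y \<Longrightarrow> f \<notin> sep X Y \<Longrightarrow> ssum X Y f = X f"
  by (simp add: ssum_apply scomp_eq_off_sep)

lemma scomp_commute_off_sep: "supp X = supp Y \<Longrightarrow> f \<notin> sep X Y \<Longrightarrow> scomp X Y f = scomp Y X f"
  by (metis scomp_eq_off_sep eq_off_sep sep_commute)

lemma I_e_commute: "supp X = supp Y \<Longrightarrow> I_e e X Y = I_e e Y X"
  unfolding I_e_def using eq_off_sep[of X Y] sep_commute[of X Y] by auto

lemma I_set_commute: "supp X = supp Y \<Longrightarrow> I_set X Y = I_set Y X"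
  unfolding I_set_def using I_e_commute[of X Y] sep_commute[of X Y] by auto

section \<open>Vectors at infinity\<close>

definition at_infinity :: "('e \<Rightarrow> sign) set \<Rightarrow> ('e \<Rightarrow> sign) set" where
  "at_infinity W = {Z. \<forall>X\<in>W. scomp Z X \<in> W \<and> scomp (sneg Z) X \<in> W}"

lemma zero_at_infinity: "(\<lambda>_. Zero) \<in> at_infinity W"
  by (simp add: at_infinity_def)

lemma sneg_at_infinity: "Z \<in> at_infinity W \<Longrightarrow> sneg Z \<in> at_infinity W"
  by (simp add: at_infinity_def)

lemma scomp_at_infinity:
  "Z \<in> at_infinity W \<Longrightarrow> Z' \<in> at_infinity W \<Longrightarrow> scomp Z Z' \<in> at_infinity W"
  by (simp add: at_infinity_def scomp_assoc sneg_scomp)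

lemma at_infinity_scomp_mem: "Z \<in> at_infinity W \<Longrightarrow> X \<in> W \<Longrightarrow> scomp Z X \<in> W"
  by (simp add: at_infinity_def)

lemma scomp_at_infinity_mem:
  assumes "axA1 W" and "Z \<in> at_infinity W" and "X \<in> W"
  shows "scomp X Z \<in> W"
proof -
  have "scomp X (scomp Z X) \<in> W"
    using assms at_infinity_scomp_mem[OF assms(2,3)] by (simp add: axA1_def)
  moreover have "scomp X (scomp Z X) = scomp X Z"
    by (rule ext) (simp add: scomp_apply)
  ultimately show ?thesis by simp
qed

lemma symmetric_at_infinity: "axA1 W \<Longrightarrow> X \<in> W \<Longrightarrow> sneg X \<in> W \<Longrightarrow> X \<in> at_infinity W"
  by (simp add: axA1_def at_infinity_def)

lemma sneg_P_set: assumes "Z \<in> P_set W" shows "sneg Z \<in> P_set W"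
proof -
  from assms obtain X Y where Z: "Z = ssum X (sneg Y)" and XY: "X \<in> asym W" "Y \<in> asym W"
    and s: "supp X = supp Y"
    and I: "I_set X (sneg Y) \<inter> W = {}" "I_set (sneg X) Y \<inter> W = {}"
    unfolding P_set_def by blast
  have "sneg Z = ssum Y (sneg X)"
  proof
    fix f show "sneg Z f = ssum Y (sneg X) f"
      using supp_eq_Zero_iff[OF s, of f] unfolding Z
      by (cases "X f"; cases "Y f"; simp add: sign_vector_simps)
  qed
  moreover have "I_set Y (sneg X) = I_set (sneg X) Y" "I_set (sneg Y) X = I_set X (sneg Y)"
    using I_set_commute[of Y "sneg X"] I_set_commute[of X "sneg Y"] s by simp_all
  ultimately show ?thesis
    unfolding P_set_def using XY s I by blast
qed

lemma P_set_at_infinity: "axA3 W \<Longrightarrow> Z \<in> P_set W \<Longrightarrow> Z \<in> at_infinity W"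
  using sneg_P_set[of Z W] by (simp add: axA3_def at_infinity_def)

text \<open>For V in I_e e X (-Y), the vector V \<circ> (-X) reverses X exactly where V vanishes; in
  particular at e, which thereby leaves the separation set.\<close>

lemma I_set_shrinks_sep:
  assumes A1: "axA1 W" and X: "X \<in> W" and s: "supp X = supp Y" and V: "V \<in> I_set X (sneg Y) \<inter> W"
  obtains X' where "X' \<in> W" "supp X' = supp Y" "sep X' (sneg Y) \<subset> sep X (sneg Y)"
    "\<forall>f. f \<notin> sep X (sneg Y) \<longrightarrow> X' f = X f"
proof
  obtain e where e: "e \<in> sep X (sneg Y)" and "V \<in> I_e e X (sneg Y)"
    using V unfolding I_set_def by blast
  then have sV: "supp V \<subseteq> supp X - {e}" and Vf: "\<And>f. f \<notin> sep X (sneg Y) \<Longrightarrow> V f = X f"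
    by (auto simp: I_e_def)
  let ?X' = "scomp V (sneg X)"
  show "?X' \<in> W" using A1 V X by (simp add: axA1_def)
  have "?X' f = Zero \<longleftrightarrow> X f = Zero" for f
    using sV by (auto simp: sign_vector_simps split: sign.splits)
  then show "supp ?X' = supp Y"
    using s by (auto simp: supp_def)
  show off: "\<forall>f. f \<notin> sep X (sneg Y) \<longrightarrow> ?X' f = X f"
    using Vf by (auto simp: sign_vector_simps split: sign.splits)
  have "V e = Zero" using sV by (auto simp: mem_supp_iff)
  then have "e \<notin> sep ?X' (sneg Y)"
    using e by (auto simp: sign_vector_simps split: sign.splits)
  moreover have "sep ?X' (sneg Y) \<subseteq> sep X (sneg Y)"
    using off by (auto simp: mem_sep_iff)
  ultimately show "sep ?X' (sneg Y) \<subset> sep X (sneg Y)" using e by blast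
qed

lemma I_set_shrinks_sep_pair:
  assumes A1: "axA1 W" and X: "X \<in> W" and Y: "Y \<in> W" and s: "supp X = supp Y"
    and I: "I_set X (sneg Y) \<inter> W \<noteq> {} \<or> I_set Y (sneg X) \<inter> W \<noteq> {}"
  obtains X' Y' where "X' \<in> W" "Y' \<in> W" "supp X' = supp Y'" "sep X' (sneg Y') \<subset> sep X (sneg Y)"
    "\<forall>f. f \<notin> sep X (sneg Y) \<longrightarrow> X' f = X f"
  using I
proof
  assume "I_set X (sneg Y) \<inter> W \<noteq> {}"
  then obtain V where "V \<in> I_set X (sneg Y) \<inter> W" by blast
  from I_set_shrinks_sep[OF A1 X s this] that Y show thesis by metis
next
  assume "I_set Y (sneg X) \<inter> W \<noteq> {}"
  then obtain V where "V \<in> I_set Y (sneg X) \<inter> W" by blast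
  from I_set_shrinks_sep[OF A1 Y s[symmetric] this] that[of X] X show thesis
    by (metis sep_sneg_commute)
qed

text \<open>Unless X or Y is symmetric, either a vector of W in one of the I-sets shrinks the
  separation set, or X + (-Y) lies in P_set W and hence at infinity by (A3).\<close>

lemma ex_at_infinity_eq_off_sep:
  fixes W :: "('e::finite \<Rightarrow> sign) set"
  assumes A1: "axA1 W" and A3: "axA3 W"
  shows "X \<in> W \<Longrightarrow> Y \<in> W \<Longrightarrow> supp X = supp Y \<Longrightarrow>
    \<exists>Z\<in>at_infinity W. \<forall>f. f \<notin> sep X (sneg Y) \<longrightarrow> Z f = X f"
proof (induction "card (sep X (sneg Y))" arbitrary: X Y rule: less_induct)
  case less
  note X = less.prems(1) and Y = less.prems(2) and s = less.prems(3)
  have sneg_Y_eq: "\<forall>f. f \<notin> sep X (sneg Y) \<longrightarrow> sneg Y f = X f"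
    using eq_off_sep[of X "sneg Y"] s by simp
  have I_swap: "I_set (sneg X) Y = I_set Y (sneg X)"
    using I_set_commute[of "sneg X" Y] s by simp
  consider "sneg X \<in> W" | "sneg Y \<in> W" | "ssum X (sneg Y) \<in> P_set W"
    | "I_set X (sneg Y) \<inter> W \<noteq> {} \<or> I_set Y (sneg X) \<inter> W \<noteq> {}"
    using X Y s I_swap unfolding P_set_def asym_def by blast
  then show ?case
  proof cases
    case 1
    then show ?thesis using symmetric_at_infinity[OF A1 X] by blast
  next
    case 2
    then show ?thesis using symmetric_at_infinity[OF A1 2] Y sneg_Y_eq by auto
  next
    case 3
    then show ?thesis
      using P_set_at_infinity[OF A3] ssum_eq_off_sep[of X "sneg Y"] s by auto
  next
    case 4
    then obtain X' Y' where X': "X' \<in> W" "Y' \<in> W" "supp X' = supp Y'"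
      and smaller: "sep X' (sneg Y') \<subset> sep X (sneg Y)"
      and eq: "\<forall>f. f \<notin> sep X (sneg Y) \<longrightarrow> X' f = X f"
      using I_set_shrinks_sep_pair[OF A1 X Y s] by metis
    have "card (sep X' (sneg Y')) < card (sep X (sneg Y))"
      using smaller by (simp add: psubset_card_mono)
    then obtain Z where "Z \<in> at_infinity W" "\<forall>f. f \<notin> sep X' (sneg Y') \<longrightarrow> Z f = X' f"
      using less.hyps X' by blast
    then show ?thesis using smaller eq by (metis psubsetD)
  qed
qed

section \<open>Elimination at vectors vanishing at a distinguished element\<close>

definition elimination_at :: "('f \<Rightarrow> sign) set \<Rightarrow> ('f \<Rightarrow> sign) \<Rightarrow> ('f \<Rightarrow> sign) \<Rightarrow> 'f \<Rightarrow> bool" where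
  "elimination_at Om X Y e \<longleftrightarrow> (\<exists>Z\<in>Om. Z e = Zero \<and> (\<forall>f. f \<notin> sep X Y \<longrightarrow> Z f = scomp X Y f))"

lemma elimination_at_commute:
  "supp X = supp Y \<Longrightarrow> elimination_at Om Y X e \<Longrightarrow> elimination_at Om X Y e"
  unfolding elimination_at_def using sep_commute[of X Y] scomp_commute_off_sep[of X Y] by metis

lemma elimination_at_sneg:
  assumes "\<And>Z. Z \<in> Om \<Longrightarrow> sneg Z \<in> Om" and "elimination_at Om (sneg X) (sneg Y) e"
  shows "elimination_at Om X Y e"
proof -
  from assms(2) obtain Z where Z: "Z \<in> Om" "Z e = Zero"
    and eq: "\<forall>f. f \<notin> sep X Y \<longrightarrow> Z f = scomp (sneg X) (sneg Y) f"
    unfolding elimination_at_def by auto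
  have "\<forall>f. f \<notin> sep X Y \<longrightarrow> sneg Z f = scomp X Y f"
    using eq by (auto simp: sign_vector_simps split: sign.splits)
  moreover have "sneg Z e = Zero" using Z by (simp add: sneg_apply)
  ultimately show ?thesis using assms(1)[OF Z(1)] unfolding elimination_at_def by blast
qed

locale elimination_off_g =
  fixes Om :: "('f::finite \<Rightarrow> sign) set" and g :: 'f
  assumes scomp_closed: "X \<in> Om \<Longrightarrow> Y \<in> Om \<Longrightarrow> scomp X Y \<in> Om"
    and sneg_closed: "X \<in> Om \<Longrightarrow> sneg X \<in> Om"
    and ex_nonzero_at_g: "\<exists>Q\<in>Om. Q g \<noteq> Zero"
    and elimination_nonzero_at_g:
      "X \<in> Om \<Longrightarrow> Y \<in> Om \<Longrightarrow> supp X = supp Y \<Longrightarrow> X g \<noteq> Zero \<Longrightarrow> e \<in> sep X Y \<Longrightarrow>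
        elimination_at Om X Y e"
begin

lemma elimination_scomp_right:
  assumes Y: "Y1 \<in> Om" "Y2 \<in> Om" "Y1 g = Zero" "supp Y1 = supp Y2" and e: "e \<in> sep Y1 Y2"
    and P: "P \<in> Om" "P g \<noteq> Zero"
  obtains Z where "Z \<in> Om" "Z e = Zero" "\<forall>f. f \<notin> sep Y1 Y2 \<longrightarrow> Z f = scomp Y1 P f"
proof -
  have zero_iff: "Y1 f = Zero \<longleftrightarrow> Y2 f = Zero" for f using supp_eq_Zero_iff[OF Y(4)] .
  have "supp (scomp Y1 P) = supp (scomp Y2 P)"
    using zero_iff by (auto simp: sign_vector_simps)
  moreover have sep_eq: "sep (scomp Y1 P) (scomp Y2 P) = sep Y1 Y2"
  proof (rule set_eqI)
    fix f show "f \<in> sep (scomp Y1 P) (scomp Y2 P) \<longleftrightarrow> f \<in> sep Y1 Y2"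
      using zero_iff[of f] by (cases "Y1 f"; cases "Y2 f"; simp add: sign_vector_simps)
  qed
  moreover have "scomp Y1 P g \<noteq> Zero" using Y(3) P(2) by (simp add: scomp_apply)
  ultimately have "elimination_at Om (scomp Y1 P) (scomp Y2 P) e"
    using elimination_nonzero_at_g scomp_closed Y P e by simp
  then obtain Z where "Z \<in> Om" "Z e = Zero"
    and "\<forall>f. f \<notin> sep Y1 Y2 \<longrightarrow> Z f = scomp (scomp Y1 P) (scomp Y2 P) f"
    unfolding elimination_at_def sep_eq by blast
  with zero_iff that show thesis by (auto simp: scomp_apply)
qed

text \<open>Eliminating e from Y1 \<circ> Q, Y2 \<circ> Q and from Y1 \<circ> (-Q), Y2 \<circ> (-Q), and then eliminating g
  between the two results, yields an elimination of e between Y1 and Y2 up to its values outside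
  supp Y1, which lie in supp Q.\<close>

lemma ex_elimination_within_supp:
  assumes Y: "Y1 \<in> Om" "Y2 \<in> Om" "Y1 g = Zero" "supp Y1 = supp Y2" and e: "e \<in> sep Y1 Y2"
    and Q: "Q \<in> Om" "Q g \<noteq> Zero"
  obtains K where "K \<in> Om" "K g = Zero" "K e = Zero" "\<forall>f\<in>supp Y1 - sep Y1 Y2. K f = Y1 f"
    "supp K \<subseteq> supp Y1 \<union> supp Q"
proof -
  have zero_iff: "Y1 f = Zero \<longleftrightarrow> Y2 f = Zero" for f using supp_eq_Zero_iff[OF Y(4)] .
  obtain Zp where Zp: "Zp \<in> Om" "Zp e = Zero" "\<forall>f. f \<notin> sep Y1 Y2 \<longrightarrow> Zp f = scomp Y1 Q f"
    using elimination_scomp_right[OF Y e Q] .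
  have "sneg Q g \<noteq> Zero" using Q(2) by (simp add: sneg_apply split: sign.splits)
  then obtain Zm where Zm: "Zm \<in> Om" "Zm e = Zero"
    "\<forall>f. f \<notin> sep Y1 Y2 \<longrightarrow> Zm f = scomp Y1 (sneg Q) f"
    using elimination_scomp_right[OF Y e sneg_closed[OF Q(1)]] by blast
  have g_off: "g \<notin> sep Y1 Y2" using Y(3) by (simp add: mem_sep_iff)
  have "Zp g = Q g" "Zm g = sneg Q g" using Zp(3) Zm(3) g_off Y(3) by (simp_all add: scomp_apply)
  then have "scomp Zp Zm g \<noteq> Zero" "g \<in> sep (scomp Zp Zm) (scomp Zm Zp)"
    using Q(2) by (cases "Q g"; simp add: sign_vector_simps)+
  moreover have "supp (scomp Zp Zm) = supp (scomp Zm Zp)" by (auto simp: sign_vector_simps)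
  ultimately obtain K where K: "K \<in> Om" "K g = Zero"
    and eq: "\<forall>f. f \<notin> sep (scomp Zp Zm) (scomp Zm Zp) \<longrightarrow> K f = scomp (scomp Zp Zm) (scomp Zm Zp) f"
    using elimination_nonzero_at_g scomp_closed Zp(1) Zm(1) unfolding elimination_at_def by metis
  show thesis
  proof
    show "K \<in> Om" "K g = Zero" by (fact K)+
    show "K e = Zero" using eq Zp(2) Zm(2) by (simp add: sign_vector_simps)
    show "\<forall>f\<in>supp Y1 - sep Y1 Y2. K f = Y1 f"
      using eq Zp(3) Zm(3) by (auto simp: sign_vector_simps)
    show "supp K \<subseteq> supp Y1 \<union> supp Q"
      using eq Zp(3) Zm(3) zero_iff by (auto simp: sign_vector_simps split: if_splits)
  qed
qed

text \<open>Eliminating f between K \<circ> Q and (-K) \<circ> Q removes f from the support of Q.\<close>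

lemma shrink_supp_outside:
  assumes K: "K \<in> Om" "K g = Zero" and Q: "Q \<in> Om" "Q g \<noteq> Zero"
    and KQ: "supp K - T \<subseteq> supp Q" and f: "f \<in> supp K - T"
  obtains R where "R \<in> Om" "R g \<noteq> Zero" "supp R - T \<subset> supp Q - T"
proof -
  have "supp (scomp K Q) = supp (scomp (sneg K) Q)"
    by (auto simp: sign_vector_simps split: sign.splits)
  moreover have sep_eq: "sep (scomp K Q) (scomp (sneg K) Q) = supp K"
    by (auto simp: sign_vector_simps split: sign.splits)
  moreover have "scomp K Q g \<noteq> Zero" using K(2) Q(2) by (simp add: scomp_apply)
  ultimately obtain R where R: "R \<in> Om" "R f = Zero"
    and eq: "\<forall>h. h \<notin> supp K \<longrightarrow> R h = scomp (scomp K Q) (scomp (sneg K) Q) h"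
    using elimination_nonzero_at_g[of "scomp K Q" "scomp (sneg K) Q" f] f
      scomp_closed sneg_closed K(1) Q(1) unfolding elimination_at_def by auto
  show thesis
  proof
    show "R \<in> Om" by (fact R)
    show "R g \<noteq> Zero" using eq K(2) Q(2) by (simp add: sign_vector_simps)
    have "h \<in> supp Q" if "h \<in> supp R - T" for h
    proof (cases "K h = Zero")
      case True
      then show ?thesis using that eq by (auto simp: sign_vector_simps)
    qed (use that KQ in \<open>auto simp: mem_supp_iff\<close>)
    then have "supp R - T \<subseteq> supp Q - T - {f}"
      using R(2) by (auto simp: mem_supp_iff)
    then show "supp R - T \<subset> supp Q - T" using f KQ by blast
  qed
qed

text \<open>Q is chosen nonzero at g with the fewest support elements outside supp Y1; by minimality
  the vector K of the previous lemmas cannot leave supp Y1.\<close>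

lemma elimination_zero_at_g:
  assumes Y: "Y1 \<in> Om" "Y2 \<in> Om" "Y1 g = Zero" "supp Y1 = supp Y2" and e: "e \<in> sep Y1 Y2"
  shows "elimination_at Om Y1 Y2 e"
proof -
  obtain Q0 where "Q0 \<in> Om" "Q0 g \<noteq> Zero" using ex_nonzero_at_g by blast
  then obtain Q where Q: "Q \<in> Om" "Q g \<noteq> Zero"
    and minimal: "\<And>Q'. Q' \<in> Om \<Longrightarrow> Q' g \<noteq> Zero \<Longrightarrow> card (supp Q - supp Y1) \<le> card (supp Q' - supp Y1)"
    using ex_has_least_nat[of "\<lambda>Q. Q \<in> Om \<and> Q g \<noteq> Zero" Q0 "\<lambda>Q. card (supp Q - supp Y1)"]
    by blast
  obtain K where K: "K \<in> Om" "K g = Zero" "K e = Zero" "\<forall>f\<in>supp Y1 - sep Y1 Y2. K f = Y1 f"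
    and KQ: "supp K \<subseteq> supp Y1 \<union> supp Q"
    using ex_elimination_within_supp[OF Y e Q] .
  have "supp K \<subseteq> supp Y1"
  proof (rule ccontr)
    assume "\<not> supp K \<subseteq> supp Y1"
    then obtain f where "f \<in> supp K - supp Y1" by blast
    with KQ obtain R where "R \<in> Om" "R g \<noteq> Zero" "supp R - supp Y1 \<subset> supp Q - supp Y1"
      using shrink_supp_outside[OF K(1,2) Q] by blast
    with minimal show False by (meson finite psubset_card_mono leD)
  qed
  then have "\<forall>f. f \<notin> sep Y1 Y2 \<longrightarrow> K f = scomp Y1 Y2 f"
    using K(4) supp_eq_Zero_iff[OF Y(4)] by (auto simp: sign_vector_simps)
  with K(1,3) show ?thesis unfolding elimination_at_def by blast
qed

end


section \<open>The homogenization\<close>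

definition lift :: "('e \<Rightarrow> sign) \<Rightarrow> sign \<Rightarrow> ('e option \<Rightarrow> sign)" where
  "lift X s = (\<lambda>z. case z of None \<Rightarrow> s | Some b \<Rightarrow> X b)"

definition homogenization :: "('e \<Rightarrow> sign) set \<Rightarrow> ('e option \<Rightarrow> sign) set" where
  "homogenization W = {Y. case Y None of
      Pos \<Rightarrow> Y \<circ> Some \<in> W | Neg \<Rightarrow> sneg (Y \<circ> Some) \<in> W | Zero \<Rightarrow> Y \<circ> Some \<in> at_infinity W}"

lemma lift_None [simp]: "lift X s None = s"
  by (simp add: lift_def)

lemma lift_Some [simp]: "lift X s (Some b) = X b"
  by (simp add: lift_def)

lemma lift_comp_Some [simp]: "lift X s \<circ> Some = X"
  by (rule ext) simp

lemma lift_restrict: "lift (Y \<circ> Some) (Y None) = Y"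
  by (rule ext) (simp add: lift_def split: option.splits)

lemma lift_mem_homogenization_iff [simp]:
  "lift X Pos \<in> homogenization W \<longleftrightarrow> X \<in> W"
  "lift X Neg \<in> homogenization W \<longleftrightarrow> sneg X \<in> W"
  "lift X Zero \<in> homogenization W \<longleftrightarrow> X \<in> at_infinity W"
  by (simp_all add: homogenization_def)

lemma sneg_lift [simp]:
  "sneg (lift X Pos) = lift (sneg X) Neg"
  "sneg (lift X Neg) = lift (sneg X) Pos"
  "sneg (lift X Zero) = lift (sneg X) Zero"
  by (rule ext, simp add: lift_def sneg_apply split: option.splits)+

lemma scomp_lift: "scomp (lift X s) (lift Y t) = lift (scomp X Y) (if s \<noteq> Zero then s else t)"
  by (rule ext) (simp add: lift_def scomp_apply split: option.splits)

lemma supp_lift_eq_iff: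
  "supp (lift X s) = supp (lift Y t) \<longleftrightarrow> supp X = supp Y \<and> (s = Zero \<longleftrightarrow> t = Zero)"
  by (auto simp: supp_def lift_def split: option.splits)

lemma Some_mem_sep_lift_iff [simp]: "Some b \<in> sep (lift X s) (lift Y t) \<longleftrightarrow> b \<in> sep X Y"
  by (simp add: mem_sep_iff)

lemma restrict_Pos_homogenization: "{X \<circ> Some | X. X \<in> homogenization W \<and> X None = Pos} = W"
proof
  show "W \<subseteq> {X \<circ> Some | X. X \<in> homogenization W \<and> X None = Pos}"
    by (auto intro!: exI[of _ "lift _ Pos"])
qed (auto simp: homogenization_def)

lemma sneg_comp_Some: "sneg Y \<circ> Some = sneg (Y \<circ> Some)"
  by (rule ext) (simp add: sneg_apply)

lemma scomp_comp_Some: "scomp X Y \<circ> Some = scomp (X \<circ> Some) (Y \<circ> Some)"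
  by (rule ext) (simp add: scomp_apply)

lemma mem_homogenization_cases:
  "Y \<in> homogenization W \<Longrightarrow> Y \<circ> Some \<in> W \<or> sneg (Y \<circ> Some) \<in> W \<or> Y \<circ> Some \<in> at_infinity W"
  by (cases "Y None") (simp_all add: homogenization_def)

lemma scomp_mem_if_mem_homogenization:
  assumes A1: "axA1 W" and X: "X \<in> W" and Y: "Y \<in> homogenization W"
  shows "scomp X (Y \<circ> Some) \<in> W"
  using mem_homogenization_cases[OF Y] A1 X scomp_at_infinity_mem
  unfolding axA1_def by (metis sneg_sneg)

lemma sneg_homogenization: "Y \<in> homogenization W \<Longrightarrow> sneg Y \<in> homogenization W"
  by (cases "Y None") (auto simp: homogenization_def sneg_apply sneg_comp_Some sneg_at_infinity)

lemma scomp_homogenization: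
  assumes A1: "axA1 W" and X: "X \<in> homogenization W" and Y: "Y \<in> homogenization W"
  shows "scomp X Y \<in> homogenization W"
proof (cases "X None")
  case Pos
  then show ?thesis using X scomp_mem_if_mem_homogenization[OF A1 _ Y]
    by (simp add: homogenization_def scomp_apply scomp_comp_Some)
next
  case Neg
  then show ?thesis using X scomp_mem_if_mem_homogenization[OF A1 _ sneg_homogenization[OF Y]]
    by (simp add: homogenization_def scomp_apply scomp_comp_Some sneg_comp_Some sneg_scomp)
next
  case Zero
  then have "X \<circ> Some \<in> at_infinity W" using X by (simp add: homogenization_def)
  then show ?thesis using Zero Y
    by (cases "Y None") (auto simp: homogenization_def scomp_apply scomp_comp_Some sneg_comp_Some
        sneg_scomp at_infinity_scomp_mem sneg_at_infinity scomp_at_infinity)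
qed

lemma elimination_lift_Pos_Pos:
  assumes A2: "axA2 W" and XY: "X \<in> W" "Y \<in> W" "supp X = supp Y"
    and e: "e \<in> sep (lift X Pos) (lift Y Pos)"
  shows "elimination_at (homogenization W) (lift X Pos) (lift Y Pos) e"
proof -
  obtain a where a: "e = Some a" "a \<in> sep X Y"
    using e by (cases e) (auto simp: mem_sep_iff)
  then obtain V where V: "V \<in> W" "V \<in> I_e a X Y"
    using A2 XY unfolding axA2_def by blast
  then have "V a = Zero" "\<forall>b. b \<notin> sep X Y \<longrightarrow> V b = X b"
    by (auto simp: I_e_def mem_supp_iff)
  moreover have "lift V Pos f = scomp (lift X Pos) (lift Y Pos) f"
    if "f \<notin> sep (lift X Pos) (lift Y Pos)" and "\<forall>b. b \<notin> sep X Y \<longrightarrow> V b = X b" for f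
    using that scomp_eq_off_sep[OF XY(3)] by (cases f) (simp_all add: scomp_lift)
  ultimately show ?thesis
    using V(1) a(1) unfolding elimination_at_def
    by (intro bexI[of _ "lift V Pos"]) simp_all
qed

text \<open>A vector Z at infinity agreeing with X where X and -Y agree gives the elimination directly if
  it vanishes at e; if it is opposite to X at e, then (A2) applied to X and Z \<circ> X does.\<close>

lemma elimination_lift_Pos_Neg_if_at_infinity:
  assumes A2: "axA2 W" and XY: "X \<in> W" "Y \<in> W" "supp X = supp Y"
    and Z: "Z \<in> at_infinity W" and agree: "\<forall>f. f \<notin> sep X (sneg Y) \<longrightarrow> Z f = X f"
    and e: "e \<in> sep (lift X Pos) (lift (sneg Y) Neg)" and disagree: "\<forall>a. e = Some a \<longrightarrow> Z a \<noteq> X a"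
  shows "elimination_at (homogenization W) (lift X Pos) (lift (sneg Y) Neg) e"
proof -
  have s: "supp X = supp (sneg Y)" using XY(3) by simp
  have goal: "elimination_at (homogenization W) (lift X Pos) (lift (sneg Y) Neg) e"
    if "U \<in> homogenization W" "U e = Zero" "\<forall>b. b \<notin> sep X (sneg Y) \<longrightarrow> U (Some b) = X b" for U
  proof -
    have "U f = scomp (lift X Pos) (lift (sneg Y) Neg) f"
      if "f \<notin> sep (lift X Pos) (lift (sneg Y) Neg)" for f
      using that \<open>\<forall>b. b \<notin> sep X (sneg Y) \<longrightarrow> U (Some b) = X b\<close> scomp_eq_off_sep[OF s]
      by (cases f) (simp_all add: scomp_lift mem_sep_iff)
    then show ?thesis using that(1,2) unfolding elimination_at_def by blast
  qed
  show ?thesis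
  proof (cases "e = None \<or> (\<exists>a. e = Some a \<and> Z a = Zero)")
    case True
    then show ?thesis using goal[of "lift Z Zero"] Z agree by auto
  next
    case False
    then obtain a where a: "e = Some a" "a \<in> sep X (sneg Y)" "Z a \<noteq> Zero" "Z a \<noteq> X a"
      using e disagree by (cases e) auto
    let ?C = "scomp Z X"
    have "?C \<in> W" using at_infinity_scomp_mem[OF Z XY(1)] .
    moreover have "supp X = supp ?C"
      using agree by (auto simp: sign_vector_simps)
    moreover have "a \<in> sep X ?C"
      using a by (cases "X a"; cases "Z a") (auto simp: sign_vector_simps)
    ultimately obtain U where U: "U \<in> W" "U \<in> I_e a X ?C"
      using A2 XY(1) unfolding axA2_def by blast
    have "\<forall>b. b \<notin> sep X (sneg Y) \<longrightarrow> b \<notin> sep X ?C"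
      using agree by (auto simp: sign_vector_simps)
    with U(2) have "U a = Zero" "\<forall>b. b \<notin> sep X (sneg Y) \<longrightarrow> U b = X b"
      by (auto simp: I_e_def mem_supp_iff)
    then show ?thesis using goal[of "lift U Pos"] U(1) a(1) by simp
  qed
qed

lemma elimination_lift_Pos_Neg:
  fixes W :: "('e::finite \<Rightarrow> sign) set"
  assumes A1: "axA1 W" and A2: "axA2 W" and A3: "axA3 W" and XY: "X \<in> W" "Y \<in> W" "supp X = supp Y"
    and e: "e \<in> sep (lift X Pos) (lift (sneg Y) Neg)"
  shows "elimination_at (homogenization W) (lift X Pos) (lift (sneg Y) Neg) e"
proof -
  obtain Z where Z: "Z \<in> at_infinity W" and agree: "\<forall>f. f \<notin> sep X (sneg Y) \<longrightarrow> Z f = X f"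
    using ex_at_infinity_eq_off_sep[OF A1 A3 XY] by blast
  show ?thesis
  proof (cases "\<exists>a. e = Some a \<and> Z a = X a")
    case False
    then have "\<forall>a. e = Some a \<longrightarrow> Z a \<noteq> X a" by blast
    then show ?thesis by (rule elimination_lift_Pos_Neg_if_at_infinity[OF A2 XY Z agree e])
  next
    case True
    then obtain a where a: "e = Some a" "Z a = X a" by blast
    with e have "a \<in> sep X (sneg Y)" by simp
    \<comment> \<open>Exchange the roles of X and Y and use -Z, which disagrees with Y at a.\<close>
    have "sneg Z f = Y f" if "f \<notin> sep Y (sneg X)" for f
    proof -
      have "Z f = sneg Y f"
        using that agree eq_off_sep[of X "sneg Y"] XY(3) by (simp add: sep_sneg_commute[of X Y])
      then show ?thesis by (cases "Y f") (simp_all add: sneg_apply)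
    qed
    then have "\<forall>f. f \<notin> sep Y (sneg X) \<longrightarrow> sneg Z f = Y f" by blast
    moreover have "e \<in> sep (lift Y Pos) (lift (sneg X) Neg)"
      using a(1) \<open>a \<in> sep X (sneg Y)\<close> by (simp add: sep_sneg_commute[of X Y])
    moreover have "\<forall>a. e = Some a \<longrightarrow> sneg Z a \<noteq> Y a"
      using a \<open>a \<in> sep X (sneg Y)\<close>
      by (cases "X a"; cases "Y a") (auto simp: sneg_apply mem_sep_iff)
    ultimately have "elimination_at (homogenization W) (lift Y Pos) (lift (sneg X) Neg) e"
      by (rule elimination_lift_Pos_Neg_if_at_infinity[OF A2 XY(2,1) XY(3)[symmetric]
          sneg_at_infinity[OF Z]])
    then have "elimination_at (homogenization W) (sneg (lift (sneg Y) Neg)) (sneg (lift X Pos)) e"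
      by simp
    then have "elimination_at (homogenization W) (lift (sneg Y) Neg) (lift X Pos) e"
      by (rule elimination_at_sneg[rotated]) (rule sneg_homogenization)
    then show ?thesis
      by (rule elimination_at_commute[rotated]) (simp add: XY(3) supp_lift_eq_iff)
  qed
qed

lemma elimination_homogenization_nonzero_at_None:
  fixes W :: "('e::finite \<Rightarrow> sign) set"
  assumes A1: "axA1 W" and A2: "axA2 W" and A3: "axA3 W"
    and X: "X \<in> homogenization W" and Y: "Y \<in> homogenization W" and s: "supp X = supp Y"
    and nonzero: "X None \<noteq> Zero" and e: "e \<in> sep X Y"
  shows "elimination_at (homogenization W) X Y e"
proof -
  obtain X' u Y' v where XY: "X = lift X' u" "Y = lift Y' v" by (metis lift_restrict)
  have s': "supp X' = supp Y'" and uv: "u \<noteq> Zero" "v \<noteq> Zero"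
    using s nonzero unfolding XY by (auto simp: supp_lift_eq_iff)
  consider "u = Pos" "v = Pos" | "u = Pos" "v = Neg" | "u = Neg" "v = Pos" | "u = Neg" "v = Neg"
    using uv by (cases u; cases v) simp_all
  then show ?thesis
  proof cases
    case 1
    then show ?thesis
      using elimination_lift_Pos_Pos[OF A2 _ _ s'] X Y e unfolding XY by simp
  next
    case 2
    then show ?thesis
      using elimination_lift_Pos_Neg[OF A1 A2 A3, of X' "sneg Y'"] X Y e s' unfolding XY by simp
  next
    case 3
    then have "elimination_at (homogenization W) Y X e"
      using elimination_lift_Pos_Neg[OF A1 A2 A3, of Y' "sneg X'"] X Y e s'
      unfolding XY by (simp add: sep_commute)
    then show ?thesis by (rule elimination_at_commute[OF s])
  next
    case 4
    moreover have "e \<in> sep (sneg X) (sneg Y)" using e by simp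
    ultimately have "elimination_at (homogenization W) (sneg X) (sneg Y) e"
      using elimination_lift_Pos_Pos[OF A2, of "sneg X'" "sneg Y'"] X Y s' unfolding XY by simp
    then show ?thesis by (rule elimination_at_sneg[rotated]) (rule sneg_homogenization)
  qed
qed

lemma oriented_matroid_homogenization:
  fixes W :: "('e::finite \<Rightarrow> sign) set"
  assumes A1: "axA1 W" and A2: "axA2 W" and A3: "axA3 W" and "W \<noteq> {}"
  shows "oriented_matroid (homogenization W)"
proof -
  interpret elimination_off_g "homogenization W" None
  proof
    obtain X where "X \<in> W" using \<open>W \<noteq> {}\<close> by blast
    then show "\<exists>Q\<in>homogenization W. Q None \<noteq> Zero"
      by (intro bexI[of _ "lift X Pos"]) simp_all
  qed (auto intro: scomp_homogenization[OF A1] sneg_homogenization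
      elimination_homogenization_nonzero_at_None[OF A1 A2 A3])
  show ?thesis
    unfolding oriented_matroid_def
  proof (intro conjI ballI impI)
    show "(\<lambda>_. Zero) \<in> homogenization W"
      using zero_at_infinity[of W] by (simp add: homogenization_def comp_def)
  next
    fix X Y e
    assume XY: "X \<in> homogenization W" "Y \<in> homogenization W" "supp X = supp Y" and e: "e \<in> sep X Y"
    have "elimination_at (homogenization W) X Y e"
    proof (cases "X None = Zero")
      case True
      then show ?thesis by (rule elimination_zero_at_g[OF XY(1,2) _ XY(3) e])
    next
      case False
      show ?thesis by (rule elimination_nonzero_at_g[OF XY False e])
    qed
    then obtain Z where "Z \<in> homogenization W" "Z e = Zero"
      "\<forall>f. f \<notin> sep X Y \<longrightarrow> Z f = scomp X Y f"
      unfolding elimination_at_def by blast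
    then show "\<exists>Z\<in>homogenization W. Z e = Zero \<and>
        (\<forall>f. f \<notin> sep X Y \<longrightarrow> Z f = scomp X Y f \<and> Z f = scomp Y X f)"
      using scomp_commute_off_sep[OF XY(3)] by auto
  qed (simp_all add: sneg_homogenization scomp_homogenization[OF A1])
qed

theorem lemma3p1:
  fixes W :: "('e::finite \<Rightarrow> sign) set"
  assumes "axA1 W" and "axA2 W" and "axA3 W"
  shows "affine_oriented_matroid W"
proof (cases "W = {}")
  case True
  have "oriented_matroid {(\<lambda>_. Zero) :: 'e option \<Rightarrow> sign}"
    unfolding oriented_matroid_def by (auto simp: sep_def)
  moreover have "W = {X \<circ> Some | X. X \<in> {(\<lambda>_. Zero) :: 'e option \<Rightarrow> sign} \<and> X None = Pos}"
    using True by auto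
  ultimately show ?thesis unfolding affine_oriented_matroid_def by blast
next
  case False
  then have "oriented_matroid (homogenization W)"
    by (rule oriented_matroid_homogenization[OF assms])
  moreover have "W = {X \<circ> Some | X. X \<in> homogenization W \<and> X None = Pos}"
    by (simp add: restrict_Pos_homogenization)
  ultimately show ?thesis unfolding affine_oriented_matroid_def by blast
qed

end
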